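(* Let $\mathcal{H}$ be a finite-dimensional complex Hilbert space, let $\ket{\psi_1},\ket{\psi_2}\in\mathcal{H}$ be pure states, let $\rho=\tfrac12(\ket{\psi_1}\!\bra{\psi_1}+\ket{\psi_2}\!\bra{\psi_2})$, and let $\alpha,\beta\in[0,1]$. Then for every ontological model (as defined in the context) for these preparations, $$\omega_Q(\psi_1,\psi_2;\alpha,\beta)-\omega_{\Lambda}(\psi_1,\psi_2;\alpha,\beta)\geq B_Q(\psi_1,\psi_2,\rho;\alpha,\beta),$$ where $$B_Q(\psi_1,\psi_2,\rho;\alpha,\beta)=2\Big((1-\alpha)D_Q(\psi_1,\psi_2)+D_Q\big(\{\psi_1,\tfrac{1+\beta}{2}\},\{\rho,\alpha+\beta\}\big)+D_Q\big(\{\psi_2,\tfrac{1+\beta}{2}\},\{\rho,\alpha+\beta\}\big)-S^{Gam}_Q(\psi_1,\psi_2;\alpha,\beta)-2\beta-1\Big).$$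
   Context: Probabilities: for a (pure or mixed) state $\sigma$ and a POVM $\mathcal{M}=\{M_k\}_k$, $p(k|\sigma,\mathcal{M})=\mathrm{Tr}(\sigma M_k)$. Weighted distinguishability: for states $\phi_1,\phi_2$ and weights $w_1,w_2\ge 0$, $D_Q(\{\phi_1,w_1\},\{\phi_2,w_2\})=\max_{\mathcal{M}}\big(w_1p(1|\phi_1,\mathcal{M})+w_2p(2|\phi_2,\mathcal{M})\big)$, the maximum over all two-outcome POVMs $\mathcal{M}=\{M_1,M_2\}$. Write $D_Q(\psi_1,\psi_2)=D_Q(\{\psi_1,\tfrac12\},\{\psi_2,\tfrac12\})$. Quantum gambling value: $S^{Gam}_Q(\psi_1,\psi_2;\alpha,\beta)=\tfrac12\max_{\mathcal{M}}\big(p(1|\psi_1,\mathcal{M})-\beta p(2|\psi_1,\mathcal{M})+\alpha p(3|\psi_1,\mathcal{M})+p(2|\psi_2,\mathcal{M})-\beta p(1|\psi_2,\mathcal{M})+\alpha p(3|\psi_2,\mathcal{M})\big)$, maximum over all three-outcome POVMs $\mathcal{M}=\{M_1,M_2,M_3\}$. The generalized quantum overlap is $\omega_Q(\psi_1,\psi_2;\alpha,\beta)=2\big(1-S^{Gam}_Q(\psi_1,\psi_2;\alpha,\beta)\big)$. Ontological model: a measure space $(\Lambda,d\lambda)$ (ontic state space); to each preparation $\sigma\in\{\psi_1,\psi_2,\rho\}$ a probability density $\mu(\lambda|\sigma)\ge0$, $\int_\Lambda\mu(\lambda|\sigma)d\lambda=1$ (epistemic state); to each $n$-outcome POVM $\mathcal{M}=\{M_k\}$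 response functions $\xi(k|\lambda,\mathcal{M})\ge0$ with $\sum_k\xi(k|\lambda,\mathcal{M})=1$ for all $\lambda$; such that $\mathrm{Tr}(\sigma M_k)=\int_\Lambda\mu(\lambda|\sigma)\xi(k|\lambda,\mathcal{M})d\lambda$ for all such $\sigma,\mathcal{M},k$. Moreover the epistemic state of the mixture respects its convex decomposition: $\mu(\lambda|\rho)=\tfrac12(\mu(\lambda|\psi_1)+\mu(\lambda|\psi_2))$ for all $\lambda$. Generalized epistemic overlap: with $\tilde\mu_1=(1+\beta)\mu(\cdot|\psi_1)$, $\tilde\mu_2=(1+\beta)\mu(\cdot|\psi_2)$, $\tilde\mu_3=(\alpha+\beta)(\mu(\cdot|\psi_1)+\mu(\cdot|\psi_2))$, $\omega_\Lambda(\psi_1,\psi_2;\alpha,\beta)=\int_\Lambda\min(\tilde\mu_1,\tilde\mu_2)d\lambda+\int_\Lambda\min(\tilde\mu_1,\tilde\mu_3)d\lambda+\int_\Lambda\min(\tilde\mu_2,\tilde\mu_3)d\lambda-2(\alpha+\beta)-\int_\Lambda\min(\tilde\mu_1,\tilde\mu_2,\tilde\mu_3)d\lambda$. *)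

theory Defs
  imports "HOL-Analysis.Analysis" "HOL-Probability.Probability" "Jordan_Normal_Form.Matrix"
begin

text \<open>Finite-dimensional complex Hilbert space = complex column vectors of length n.
 Operators are n x n complex matrices (Jordan_Normal_Form).\<close>

definition psd :: "nat \<Rightarrow> complex mat \<Rightarrow> bool" where
  "psd n A \<longleftrightarrow> A \<in> carrier_mat n n \<and>
     (\<forall>v \<in> carrier_vec n.
        (\<Sum>i<n. \<Sum>j<n. cnj (v $ i) * A $$ (i, j) * v $ j) \<in> \<real> \<and>
        0 \<le> Re (\<Sum>i<n. \<Sum>j<n. cnj (v $ i) * A $$ (i, j) * v $ j))"

text \<open>A POVM with outcomes 1..length Ms: the outcome k corresponds to Ms ! (k - 1).\<close>
definition povm :: "nat \<Rightarrow> complex mat list \<Rightarrow> bool" where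
  "povm n Ms \<longleftrightarrow> (\<forall>M \<in> set Ms. psd n M) \<and>
     (\<forall>i<n. \<forall>j<n. (\<Sum>M\<leftarrow>Ms. M $$ (i, j)) = (if i = j then 1 else 0))"

definition mat_trace :: "complex mat \<Rightarrow> complex" where
  "mat_trace A = (\<Sum>i<dim_row A. A $$ (i, i))"

definition prob :: "complex mat \<Rightarrow> complex mat list \<Rightarrow> nat \<Rightarrow> real" where
  "prob \<sigma> Ms k = Re (mat_trace (\<sigma> * Ms ! (k - 1)))"

definition pure_state :: "nat \<Rightarrow> complex vec \<Rightarrow> bool" where
  "pure_state n \<psi> \<longleftrightarrow> \<psi> \<in> carrier_vec n \<and> (\<Sum>i<n. (cmod (\<psi> $ i))\<^sup>2) = 1"

definition proj :: "nat \<Rightarrow> complex vec \<Rightarrow> complex mat" where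
  "proj n \<psi> = mat n n (\<lambda>(i, j). \<psi> $ i * cnj (\<psi> $ j))"

definition mixture :: "nat \<Rightarrow> complex vec \<Rightarrow> complex vec \<Rightarrow> complex mat" where
  "mixture n \<psi>1 \<psi>2 = mat n n (\<lambda>(i, j). (proj n \<psi>1 $$ (i, j) + proj n \<psi>2 $$ (i, j)) / 2)"

text \<open>Weighted distinguishability (maximum over two-outcome POVMs, taken as a supremum).\<close>
definition DQw :: "nat \<Rightarrow> complex mat \<Rightarrow> real \<Rightarrow> complex mat \<Rightarrow> real \<Rightarrow> real" where
  "DQw n \<phi>1 w1 \<phi>2 w2 =
     Sup {w1 * prob \<phi>1 Ms 1 + w2 * prob \<phi>2 Ms 2 | Ms. povm n Ms \<and> length Ms = 2}"

definition DQ :: "nat \<Rightarrow> complex mat \<Rightarrow> complex mat \<Rightarrow> real" where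
  "DQ n \<psi>1 \<psi>2 = DQw n \<psi>1 (1/2) \<psi>2 (1/2)"

text \<open>Quantum gambling value (maximum over three-outcome POVMs, taken as a supremum).\<close>
definition SGamQ :: "nat \<Rightarrow> complex mat \<Rightarrow> complex mat \<Rightarrow> real \<Rightarrow> real \<Rightarrow> real" where
  "SGamQ n \<psi>1 \<psi>2 \<alpha> \<beta> = (1/2) * Sup
     {prob \<psi>1 Ms 1 - \<beta> * prob \<psi>1 Ms 2 + \<alpha> * prob \<psi>1 Ms 3
      + prob \<psi>2 Ms 2 - \<beta> * prob \<psi>2 Ms 1 + \<alpha> * prob \<psi>2 Ms 3 | Ms. povm n Ms \<and> length Ms = 3}"

definition omegaQ :: "nat \<Rightarrow> complex mat \<Rightarrow> complex mat \<Rightarrow> real \<Rightarrow> real \<Rightarrow> real" where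
  "omegaQ n \<psi>1 \<psi>2 \<alpha> \<beta> = 2 * (1 - SGamQ n \<psi>1 \<psi>2 \<alpha> \<beta>)"

definition BQ :: "nat \<Rightarrow> complex mat \<Rightarrow> complex mat \<Rightarrow> complex mat \<Rightarrow> real \<Rightarrow> real \<Rightarrow> real" where
  "BQ n \<psi>1 \<psi>2 \<rho> \<alpha> \<beta> = 2 * ((1 - \<alpha>) * DQ n \<psi>1 \<psi>2
      + DQw n \<psi>1 ((1 + \<beta>) / 2) \<rho> (\<alpha> + \<beta>)
      + DQw n \<psi>2 ((1 + \<beta>) / 2) \<rho> (\<alpha> + \<beta>)
      - SGamQ n \<psi>1 \<psi>2 \<alpha> \<beta> - 2 * \<beta> - 1)"

text \<open>Ontological model for the preparations psi1, psi2, rho (given as density matrices) on the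
 ontic measure space L: epistemic states mu and response functions xi (indexed by the POVM).\<close>
definition ontological_model ::
  "nat \<Rightarrow> complex mat \<Rightarrow> complex mat \<Rightarrow> complex mat \<Rightarrow> 'l measure
   \<Rightarrow> (complex mat \<Rightarrow> 'l \<Rightarrow> real) \<Rightarrow> (complex mat list \<Rightarrow> nat \<Rightarrow> 'l \<Rightarrow> real) \<Rightarrow> bool" where
  "ontological_model n \<psi>1 \<psi>2 \<rho> L mu xi \<longleftrightarrow>
     (\<forall>\<sigma> \<in> {\<psi>1, \<psi>2, \<rho>}.
        mu \<sigma> \<in> borel_measurable L \<and> integrable L (mu \<sigma>) \<and>
        (\<forall>l \<in> space L. 0 \<le> mu \<sigma> l) \<and> (\<integral>l. mu \<sigma> l \<partial>L) = 1) \<and>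
     (\<forall>Ms. povm n Ms \<longrightarrow>
        (\<forall>k \<in> {1..length Ms}. xi Ms k \<in> borel_measurable L \<and> (\<forall>l \<in> space L. 0 \<le> xi Ms k l)) \<and>
        (\<forall>l \<in> space L. (\<Sum>k = 1..length Ms. xi Ms k l) = 1) \<and>
        (\<forall>\<sigma> \<in> {\<psi>1, \<psi>2, \<rho>}. \<forall>k \<in> {1..length Ms}.
            prob \<sigma> Ms k = (\<integral>l. mu \<sigma> l * xi Ms k l \<partial>L))) \<and>
     (\<forall>l \<in> space L. mu \<rho> l = (mu \<psi>1 l + mu \<psi>2 l) / 2)"

definition omegaLambda :: "'l measure \<Rightarrow> ('l \<Rightarrow> real) \<Rightarrow> ('l \<Rightarrow> real) \<Rightarrow> real \<Rightarrow> real \<Rightarrow> real" where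
  "omegaLambda L mu1 mu2 \<alpha> \<beta> =
    (let t1 = (\<lambda>l. (1 + \<beta>) * mu1 l); t2 = (\<lambda>l. (1 + \<beta>) * mu2 l);
         t3 = (\<lambda>l. (\<alpha> + \<beta>) * (mu1 l + mu2 l))
     in (\<integral>l. min (t1 l) (t2 l) \<partial>L) + (\<integral>l. min (t1 l) (t3 l) \<partial>L)
        + (\<integral>l. min (t2 l) (t3 l) \<partial>L) - 2 * (\<alpha> + \<beta>)
        - (\<integral>l. min (min (t1 l) (t2 l)) (t3 l) \<partial>L))"

end

theory Submission
  imports Defs
begin

(* A two-outcome measurement with response functions xi1 + xi2 = 1 has weighted success
   w1 * int mu_a xi1 + w2 * int mu_b xi2 <= int max (w1 mu_a, w2 mu_b)
   = w1 + w2 - int min (w1 mu_a, w2 mu_b), so every weighted distinguishability is bounded by an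
   epistemic overlap.  For the pairs (psi1, rho) and (psi2, rho), with mu_rho = (mu_psi1 + mu_psi2) / 2,
   these are the two overlaps of omega_Lambda involving the third weight; its remaining pairwise
   term minus the triple term is pointwise at most (1 - alpha) min (mu_psi1, mu_psi2), which the
   bound for (psi1, psi2) covers.  The gambling value enters omega_Q and B_Q with the same weight
   and cancels, and purity of the states is never used. *)

lemma integrable_mult_response:
  fixes f x :: "'l \<Rightarrow> real"
  assumes "integrable L f" and "x \<in> borel_measurable L"
    and "\<forall>l\<in>space L. 0 \<le> x l \<and> x l \<le> 1"
  shows "integrable L (\<lambda>l. f l * x l)"
proof (rule Bochner_Integration.integrable_bound[OF assms(1)])
  show "(\<lambda>l. f l * x l) \<in> borel_measurable L"
    using borel_measurable_integrable[OF assms(1)] assms(2) by measurable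
  show "AE l in L. norm (f l * x l) \<le> norm (f l)"
    using assms(3) by (intro AE_I2) (simp add: abs_mult mult_left_le)
qed

lemma integral_response_le_integral_max:
  fixes f g x1 x2 :: "'l \<Rightarrow> real"
  assumes f: "integrable L f" and g: "integrable L g"
    and x1: "x1 \<in> borel_measurable L" and x2: "x2 \<in> borel_measurable L"
    and nonneg: "\<forall>l\<in>space L. 0 \<le> x1 l \<and> 0 \<le> x2 l"
    and sum_one: "\<forall>l\<in>space L. x1 l + x2 l = 1"
  shows "w1 * (\<integral>l. f l * x1 l \<partial>L) + w2 * (\<integral>l. g l * x2 l \<partial>L)
         \<le> (\<integral>l. max (w1 * f l) (w2 * g l) \<partial>L)"
proof -
  have "\<forall>l\<in>space L. 0 \<le> x1 l \<and> x1 l \<le> 1" "\<forall>l\<in>space L. 0 \<le> x2 l \<and> x2 l \<le> 1"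
    using nonneg sum_one by force+
  then have fx1: "integrable L (\<lambda>l. f l * x1 l)" and gx2: "integrable L (\<lambda>l. g l * x2 l)"
    using integrable_mult_response f g x1 x2 by blast+
  have "w1 * (\<integral>l. f l * x1 l \<partial>L) + w2 * (\<integral>l. g l * x2 l \<partial>L)
      = (\<integral>l. w1 * f l * x1 l + w2 * g l * x2 l \<partial>L)"
    using fx1 gx2 by (simp add: mult.assoc)
  also have "\<dots> \<le> (\<integral>l. max (w1 * f l) (w2 * g l) \<partial>L)"
  proof (rule integral_mono)
    show "integrable L (\<lambda>l. w1 * f l * x1 l + w2 * g l * x2 l)"
      using fx1 gx2 by (simp add: mult.assoc)
    show "integrable L (\<lambda>l. max (w1 * f l) (w2 * g l))"
      using f g by auto
    fix l assume "l \<in> space L"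
    then have "0 \<le> x1 l" "0 \<le> x2 l" "x1 l + x2 l = 1"
      using nonneg sum_one by auto
    then have "w1 * f l * x1 l + w2 * g l * x2 l
        \<le> max (w1 * f l) (w2 * g l) * x1 l + max (w1 * f l) (w2 * g l) * x2 l"
      by (intro add_mono mult_right_mono) auto
    also have "\<dots> = max (w1 * f l) (w2 * g l)"
      using \<open>x1 l + x2 l = 1\<close> by (simp add: distrib_left[symmetric])
    finally show "w1 * f l * x1 l + w2 * g l * x2 l \<le> max (w1 * f l) (w2 * g l)" .
  qed
  finally show ?thesis .
qed

lemma psd_one_mat: "psd n (1\<^sub>m n)"
proof -
  have "(\<Sum>i<n. \<Sum>j<n. cnj (v $ i) * 1\<^sub>m n $$ (i, j) * v $ j) = of_real (\<Sum>i<n. (cmod (v $ i))\<^sup>2)"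
    for v :: "complex vec"
  proof -
    have "(\<Sum>j<n. cnj (v $ i) * 1\<^sub>m n $$ (i, j) * v $ j) = of_real ((cmod (v $ i))\<^sup>2)" if "i < n" for i
    proof -
      have "(\<Sum>j<n. cnj (v $ i) * 1\<^sub>m n $$ (i, j) * v $ j) = (\<Sum>j<n. if j = i then cnj (v $ i) * v $ i else 0)"
        using that by (intro sum.cong) auto
      also have "\<dots> = cnj (v $ i) * v $ i"
        using that by simp
      also have "\<dots> = of_real ((cmod (v $ i))\<^sup>2)"
        unfolding complex_norm_square by (rule mult.commute)
      finally show ?thesis .
    qed
    then show ?thesis by simp
  qed
  then show ?thesis
    unfolding psd_def by (simp add: sum_nonneg)
qed

lemma povm_one_zero: "povm n [1\<^sub>m n, 0\<^sub>m n n]"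
  unfolding povm_def using psd_one_mat[of n] by (auto simp: psd_def)

lemma DQw_le_epistemic_overlap:
  fixes L :: "'l measure"
  assumes model: "ontological_model n \<psi>1 \<psi>2 \<rho> L mu xi"
    and a: "\<sigma>a \<in> {\<psi>1, \<psi>2, \<rho>}" and b: "\<sigma>b \<in> {\<psi>1, \<psi>2, \<rho>}"
  shows "DQw n \<sigma>a w1 \<sigma>b w2 \<le> w1 + w2 - (\<integral>l. min (w1 * mu \<sigma>a l) (w2 * mu \<sigma>b l) \<partial>L)"
proof -
  have int_a: "integrable L (mu \<sigma>a)" "(\<integral>l. mu \<sigma>a l \<partial>L) = 1"
    and int_b: "integrable L (mu \<sigma>b)" "(\<integral>l. mu \<sigma>b l \<partial>L) = 1"
    using model a b unfolding ontological_model_def by blast+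
  have success_le: "w1 * prob \<sigma>a Ms 1 + w2 * prob \<sigma>b Ms 2 \<le> (\<integral>l. max (w1 * mu \<sigma>a l) (w2 * mu \<sigma>b l) \<partial>L)"
    if Ms: "povm n Ms" "length Ms = 2" for Ms
  proof -
    have outcomes: "{1..length Ms} = {1, 2}" "1 \<in> {1..length Ms}" "2 \<in> {1..length Ms}"
      using Ms(2) by auto
    have response: "xi Ms 1 \<in> borel_measurable L" "xi Ms 2 \<in> borel_measurable L"
      "\<forall>l\<in>space L. 0 \<le> xi Ms 1 l \<and> 0 \<le> xi Ms 2 l"
      "\<forall>l\<in>space L. xi Ms 1 l + xi Ms 2 l = 1"
      using model Ms(1) outcomes unfolding ontological_model_def by auto
    have "prob \<sigma>a Ms 1 = (\<integral>l. mu \<sigma>a l * xi Ms 1 l \<partial>L)"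
      "prob \<sigma>b Ms 2 = (\<integral>l. mu \<sigma>b l * xi Ms 2 l \<partial>L)"
      using model Ms(1) a b outcomes unfolding ontological_model_def by blast+
    then show ?thesis
      using integral_response_le_integral_max[OF int_a(1) int_b(1) response] by simp
  qed
  have "DQw n \<sigma>a w1 \<sigma>b w2 \<le> (\<integral>l. max (w1 * mu \<sigma>a l) (w2 * mu \<sigma>b l) \<partial>L)"
    unfolding DQw_def using povm_one_zero[of n] success_le by (intro cSup_least) auto
  also have "\<dots> = (\<integral>l. w1 * mu \<sigma>a l + w2 * mu \<sigma>b l - min (w1 * mu \<sigma>a l) (w2 * mu \<sigma>b l) \<partial>L)"
    by (intro Bochner_Integration.integral_cong) (auto simp: max_def min_def)
  also have "\<dots> = w1 + w2 - (\<integral>l. min (w1 * mu \<sigma>a l) (w2 * mu \<sigma>b l) \<partial>L)"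
    using int_a int_b by simp
  finally show ?thesis .
qed

lemma DQw_mixture_le_epistemic_overlap:
  fixes L :: "'l measure"
  assumes model: "ontological_model n \<psi>1 \<psi>2 \<rho> L mu xi" and \<sigma>: "\<sigma> \<in> {\<psi>1, \<psi>2}"
  shows "DQw n \<sigma> (w1 / 2) \<rho> w2
    \<le> w1 / 2 + w2 - (\<integral>l. min (w1 * mu \<sigma> l) (w2 * (mu \<psi>1 l + mu \<psi>2 l)) \<partial>L) / 2"
proof -
  have mixture: "\<forall>l\<in>space L. mu \<rho> l = (mu \<psi>1 l + mu \<psi>2 l) / 2"
    using model unfolding ontological_model_def by blast
  have "DQw n \<sigma> (w1 / 2) \<rho> w2 \<le> w1 / 2 + w2 - (\<integral>l. min (w1 / 2 * mu \<sigma> l) (w2 * mu \<rho> l) \<partial>L)"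
    using DQw_le_epistemic_overlap[OF model] \<sigma> by blast
  also have "(\<integral>l. min (w1 / 2 * mu \<sigma> l) (w2 * mu \<rho> l) \<partial>L)
      = (\<integral>l. 1 / 2 * min (w1 * mu \<sigma> l) (w2 * (mu \<psi>1 l + mu \<psi>2 l)) \<partial>L)"
    by (intro Bochner_Integration.integral_cong) (simp_all add: mixture min_mult_distrib_left)
  finally show ?thesis
    by simp
qed

lemma min_pair_diff_min_triple_le:
  fixes x y a b :: real
  assumes "0 \<le> x" "0 \<le> y" "a \<le> 1" "0 \<le> a + b"
  shows "min ((1 + b) * x) ((1 + b) * y) - min (min ((1 + b) * x) ((1 + b) * y)) ((a + b) * (x + y))
         \<le> (1 - a) * min x y"
proof -
  have pair: "min ((1 + b) * x) ((1 + b) * y) = (1 + b) * min x y"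
    using assms by (simp add: min_mult_distrib_left)
  have "(a + b) * min x y \<le> (a + b) * (x + y)"
    using assms by (intro mult_left_mono) auto
  moreover have "(a + b) * min x y \<le> (1 + b) * min x y"
    using assms by (intro mult_right_mono) auto
  ultimately show ?thesis
    unfolding pair by (auto simp: min_def algebra_simps)
qed

lemma omegaLambda_le:
  fixes m1 m2 :: "'l \<Rightarrow> real"
  assumes "integrable L m1" "integrable L m2"
    and "\<forall>l\<in>space L. 0 \<le> m1 l \<and> 0 \<le> m2 l" and "\<alpha> \<le> 1" "0 \<le> \<alpha> + \<beta>"
  shows "omegaLambda L m1 m2 \<alpha> \<beta>
    \<le> (1 - \<alpha>) * (\<integral>l. min (m1 l) (m2 l) \<partial>L)
      + (\<integral>l. min ((1 + \<beta>) * m1 l) ((\<alpha> + \<beta>) * (m1 l + m2 l)) \<partial>L)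
      + (\<integral>l. min ((1 + \<beta>) * m2 l) ((\<alpha> + \<beta>) * (m1 l + m2 l)) \<partial>L) - 2 * (\<alpha> + \<beta>)"
proof -
  let ?t1 = "\<lambda>l. (1 + \<beta>) * m1 l" and ?t2 = "\<lambda>l. (1 + \<beta>) * m2 l"
    and ?t3 = "\<lambda>l. (\<alpha> + \<beta>) * (m1 l + m2 l)"
  have "(\<integral>l. min (?t1 l) (?t2 l) \<partial>L) - (\<integral>l. min (min (?t1 l) (?t2 l)) (?t3 l) \<partial>L)
      = (\<integral>l. min (?t1 l) (?t2 l) - min (min (?t1 l) (?t2 l)) (?t3 l) \<partial>L)"
    using assms(1,2) by simp
  also have "\<dots> \<le> (\<integral>l. (1 - \<alpha>) * min (m1 l) (m2 l) \<partial>L)"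
    using assms by (intro integral_mono min_pair_diff_min_triple_le) auto
  also have "\<dots> = (1 - \<alpha>) * (\<integral>l. min (m1 l) (m2 l) \<partial>L)"
    by simp
  finally show ?thesis
    unfolding omegaLambda_def Let_def by linarith
qed

theorem theorem2:
  fixes n :: nat and \<psi>1 \<psi>2 :: "complex vec" and \<alpha> \<beta> :: real
    and L :: "'l measure" and mu :: "complex mat \<Rightarrow> 'l \<Rightarrow> real"
    and xi :: "complex mat list \<Rightarrow> nat \<Rightarrow> 'l \<Rightarrow> real"
  assumes "pure_state n \<psi>1" and "pure_state n \<psi>2"
    and "\<alpha> \<in> {0..1}" and "\<beta> \<in> {0..1}"
    and "ontological_model n (proj n \<psi>1) (proj n \<psi>2) (mixture n \<psi>1 \<psi>2) L mu xi"
  shows "omegaQ n (proj n \<psi>1) (proj n \<psi>2) \<alpha> \<beta>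
           - omegaLambda L (mu (proj n \<psi>1)) (mu (proj n \<psi>2)) \<alpha> \<beta>
         \<ge> BQ n (proj n \<psi>1) (proj n \<psi>2) (mixture n \<psi>1 \<psi>2) \<alpha> \<beta>"
proof -
  let ?p1 = "proj n \<psi>1" and ?p2 = "proj n \<psi>2" and ?\<rho> = "mixture n \<psi>1 \<psi>2"
  note model = assms(5)
  have weights: "0 \<le> 1 - \<alpha>" "\<alpha> \<le> 1" "0 \<le> \<alpha> + \<beta>"
    using assms(3,4) by auto
  have densities: "integrable L (mu ?p1)" "integrable L (mu ?p2)"
    "\<forall>l\<in>space L. 0 \<le> mu ?p1 l \<and> 0 \<le> mu ?p2 l"
    using model unfolding ontological_model_def by auto
  have "DQ n ?p1 ?p2 \<le> 1 / 2 + 1 / 2 - (\<integral>l. 1 / 2 * min (mu ?p1 l) (mu ?p2 l) \<partial>L)"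
    using DQw_le_epistemic_overlap[OF model, of ?p1 ?p2 "1 / 2" "1 / 2"]
    unfolding DQ_def by (simp add: min_mult_distrib_left)
  then have "(1 - \<alpha>) * DQ n ?p1 ?p2 \<le> (1 - \<alpha>) * (1 - (\<integral>l. min (mu ?p1 l) (mu ?p2 l) \<partial>L) / 2)"
    using weights(1) by (intro mult_left_mono) auto
  then have "(1 - \<alpha>) * DQ n ?p1 ?p2 \<le> (1 - \<alpha>) - (1 - \<alpha>) * (\<integral>l. min (mu ?p1 l) (mu ?p2 l) \<partial>L) / 2"
    by (simp add: right_diff_distrib)
  moreover have "DQw n ?p1 ((1 + \<beta>) / 2) ?\<rho> (\<alpha> + \<beta>) \<le> (1 + \<beta>) / 2 + (\<alpha> + \<beta>)
      - (\<integral>l. min ((1 + \<beta>) * mu ?p1 l) ((\<alpha> + \<beta>) * (mu ?p1 l + mu ?p2 l)) \<partial>L) / 2"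
    "DQw n ?p2 ((1 + \<beta>) / 2) ?\<rho> (\<alpha> + \<beta>) \<le> (1 + \<beta>) / 2 + (\<alpha> + \<beta>)
      - (\<integral>l. min ((1 + \<beta>) * mu ?p2 l) ((\<alpha> + \<beta>) * (mu ?p1 l + mu ?p2 l)) \<partial>L) / 2"
    by (auto intro: DQw_mixture_le_epistemic_overlap[OF model])
  moreover note omegaLambda_le[OF densities weights(2,3)]
  ultimately show ?thesis
    unfolding omegaQ_def BQ_def by (simp add: field_simps)
qed

end
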